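(* Let $\ell$ be a positive integer and $n$ an integer such that $n/\ell\in\mathbb Z$ and $n\ell+\ell^2>0$. For $u,v\in\mathbb C$, $\tau\in\mathbb H$ and $n',e'\in\mathbb C$ define $$\chi_{\mathsf T^{n,\ell}_{n',e'}}(u,v;\tau)=i(-1)^{\lfloor e'\rfloor}\frac{\theta_1(u;\tau)}{\eta(\tau)^3}\sum_{m\in\mathbb Z}(-1)^{m\ell}e^{2\pi i v(e'+m\ell)}e^{2\pi i u(n'+mn)}e^{2\pi i\tau\left(n'e'+\frac{e'^2}{2}+\frac{m^2}{2}(2n\ell+\ell^2)+m(ne'+n'\ell+\ell e')\right)},$$ where $\lfloor e'\rfloor$ is the largest integer less than or equal to the real part of $e'$. Then, writing $y=e^{2\pi i v}$, $z=e^{2\pi i u}$, $$\chi_{\mathsf T^{n,\ell}_{n',e'}}(u+1,v;\tau)=e^{2\pi i(n'-1/2)}\chi_{\mathsf T^{n,\ell}_{n',e'}}(u,v;\tau),\qquad \chi_{\mathsf T^{n,\ell}_{n',e'}}(u+\tau,v;\tau)=y^{-1}\chi_{\mathsf T^{n,\ell}_{n'-1,e'+1}}(u,v;\tau),$$ $$\chi_{\mathsf T^{n,\ell}_{n',e'}}(u,v+1;\tau)=e^{2\pi i e'}\chi_{\mathsf T^{n,\ell}_{n',e'}}(u,v;\tau),\qquad \chi_{\mathsf T^{n,\ell}_{n',e'}}(u,v+\tau;\tau)=z^{-1}\chi_{\mathsf T^{n,\ell}_{n'+1,e'}}(u,v;\tau),$$ and more generally, for every $\alpha\in\mathbb R$,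 $$\chi_{\mathsf T^{n,\ell}_{n',e'}}(u,v+\alpha\tau;\tau)=e^{-2\pi i\alpha u}\,\chi_{\mathsf T^{n,\ell}_{n'+\alpha,e'}}(u,v;\tau).$$
   Context: $\theta_1(u;\tau)=-i\sum_{n\in\mathbb Z}(-1)^n e^{\pi i(n+\frac12)^2\tau+2\pi i u(n+\frac12)}$ and $\eta(\tau)=e^{\pi i\tau/12}\prod_{j\ge1}(1-e^{2\pi i j\tau})$. The function $\chi_{\mathsf T^{n,\ell}_{n',e'}}$ is the character of the typical module $\mathsf T^{n,\ell}_{n',e'}$ of a W-superalgebra extending $\widehat{\mathfrak{gl}}(1|1)$; here it is taken as defined by the displayed formula (the series converges since $2n\ell+\ell^2>0$). *)

theory Defs
  imports "HOL-Analysis.Analysis"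
begin

definition theta1 :: "complex \<Rightarrow> complex \<Rightarrow> complex" where
  "theta1 u \<tau> = - \<i> * (\<Sum>\<^sub>\<infinity> k\<in>(UNIV::int set).
      (-1) powi k * exp (pi * \<i> * (of_int k + 1/2)^2 * \<tau> + 2 * pi * \<i> * u * (of_int k + 1/2)))"

definition eta :: "complex \<Rightarrow> complex" where
  "eta \<tau> = exp (pi * \<i> * \<tau> / 12) * (\<Prod>j. (1 - exp (2 * pi * \<i> * of_nat (Suc j) * \<tau>)))"

definition chiT :: "int \<Rightarrow> int \<Rightarrow> complex \<Rightarrow> complex \<Rightarrow> complex \<Rightarrow> complex \<Rightarrow> complex \<Rightarrow> complex" where
  "chiT n l n' e' u v \<tau> =
     \<i> * (-1) powi \<lfloor>Re e'\<rfloor> * theta1 u \<tau> / (eta \<tau>)^3 *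
     (\<Sum>\<^sub>\<infinity> m\<in>(UNIV::int set).
        (-1) powi (m * l) * exp (2 * pi * \<i> * v * (e' + of_int m * of_int l))
        * exp (2 * pi * \<i> * u * (n' + of_int m * of_int n))
        * exp (2 * pi * \<i> * \<tau> * (n' * e' + e'^2 / 2
              + (of_int m)^2 / 2 * (2 * of_int n * of_int l + (of_int l)^2)
              + of_int m * (of_int n * e' + n' * of_int l + of_int l * e'))))"

end

theory Submission
  imports Defs
begin

text \<open>Each quasi-periodicity already holds summand by summand: the shift multiplies every
  summand of the series for \<open>\<theta>\<^sub>1\<close> or \<open>\<chi>\<close> by a factor independent of the summation index
  (for \<open>\<theta>\<^sub>1(u + \<tau>)\<close> after reindexing \<open>k \<mapsto> k + 1\<close>). Such identities pass to \<open>\<Sum>\<^sub>\<infinity>\<close>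
  without any convergence argument.
  In the series for \<open>\<chi>\<close> the exponentials combine into \<open>exp (2\<pi>i \<phi>)\<close> with a phase \<open>\<phi>\<close> affine
  in \<open>u\<close> and \<open>v\<close>; shifting \<open>u\<close> or \<open>v\<close> changes \<open>\<phi>\<close> by a constant plus an integer, or trades
  \<open>v \<mapsto> v + \<alpha>\<tau>\<close> for \<open>n' \<mapsto> n' + \<alpha>\<close>.\<close>

lemma exp_2pi_i_plus_int: "exp (2 * pi * \<i> * (x + of_int k)) = exp (2 * pi * \<i> * x)"
proof -
  have "2 * pi * \<i> * (x + of_int k) = 2 * pi * \<i> * x + \<i> * (of_int k * (of_real pi * 2))"
    by (simp add: algebra_simps)
  then show ?thesis
    by simp
qed

lemma infsum_cmult_cong:
  fixes c :: "'a :: {topological_semigroup_mult, division_ring, t2_space}"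
  assumes "\<And>x. x \<in> A \<Longrightarrow> f x = c * g x"
  shows "infsum f A = c * infsum g A"
proof -
  have "infsum f A = infsum (\<lambda>x. c * g x) A"
    using assms by (rule infsum_cong)
  then show ?thesis
    by (simp only: infsum_cmult_right')
qed

lemma infsum_exp_phase_shift:
  assumes "\<And>m. m \<in> A \<Longrightarrow> p m = c + q m + of_int (k m)"
  shows "(\<Sum>\<^sub>\<infinity>m\<in>A. s m * exp (2 * pi * \<i> * p m))
       = exp (2 * pi * \<i> * c) * (\<Sum>\<^sub>\<infinity>m\<in>A. s m * exp (2 * pi * \<i> * q m))"
proof (rule infsum_cmult_cong)
  fix m assume "m \<in> A"
  then have "exp (2 * pi * \<i> * p m) = exp (2 * pi * \<i> * (c + q m))"
    using assms exp_2pi_i_plus_int by metis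
  then show "s m * exp (2 * pi * \<i> * p m) = exp (2 * pi * \<i> * c) * (s m * exp (2 * pi * \<i> * q m))"
    by (simp add: distrib_left exp_add)
qed

lemma theta1_plus_1: "theta1 (u + 1) \<tau> = - theta1 u \<tau>"
proof -
  define a where "a k u = pi * \<i> * (of_int k + 1/2)^2 * \<tau> + 2 * pi * \<i> * u * (of_int k + 1/2)"
    for k :: int and u
  have "a k (u + 1) = (a k u + \<i> * (of_int k * (of_real pi * 2))) + pi * \<i>" for k
    by (simp add: a_def algebra_simps)
  then have "exp (a k (u + 1)) = - exp (a k u)" for k
    by (simp add: exp_add exp_pi_i)
  then have "(\<Sum>\<^sub>\<infinity>k. (-1) powi k * exp (a k (u + 1))) = -1 * (\<Sum>\<^sub>\<infinity>k. (-1) powi k * exp (a k u))"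
    by (intro infsum_cmult_cong) simp
  then show ?thesis
    unfolding theta1_def a_def by simp
qed

lemma theta1_plus_tau:
  "theta1 (u + \<tau>) \<tau> = - exp (- pi * \<i> * \<tau> - 2 * pi * \<i> * u) * theta1 u \<tau>"
proof -
  define f where "f k = (-1) powi k * exp (pi * \<i> * (of_int k + 1/2)^2 * \<tau> + 2 * pi * \<i> * u * (of_int k + 1/2))"
    for k :: int
  have shifted: "(-1) powi k * exp (pi * \<i> * (of_int k + 1/2)^2 * \<tau> + 2 * pi * \<i> * (u + \<tau>) * (of_int k + 1/2))
      = - exp (- pi * \<i> * \<tau> - 2 * pi * \<i> * u) * f (k + 1)" for k :: int
  proof -
    have "pi * \<i> * (of_int k + 1/2)^2 * \<tau> + 2 * pi * \<i> * (u + \<tau>) * (of_int k + 1/2)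
        = (- pi * \<i> * \<tau> - 2 * pi * \<i> * u)
          + (pi * \<i> * (of_int (k + 1) + 1/2)^2 * \<tau> + 2 * pi * \<i> * u * (of_int (k + 1) + 1/2))"
      by (simp add: algebra_simps power2_eq_square)
    then show ?thesis
      by (simp add: f_def power_int_add exp_add)
  qed
  have "bij_betw (\<lambda>k::int. k + 1) UNIV UNIV"
    by (rule bij_betwI[where g = "\<lambda>k. k - 1"]) auto
  then have "(\<Sum>\<^sub>\<infinity>k. f (k + 1)) = (\<Sum>\<^sub>\<infinity>k. f k)"
    using infsum_reindex_bij_betw by blast
  then show ?thesis
    unfolding theta1_def shifted infsum_cmult_right' by (simp add: f_def)
qed

definition chiT_phase ::
    "int \<Rightarrow> int \<Rightarrow> complex \<Rightarrow> complex \<Rightarrow> complex \<Rightarrow> complex \<Rightarrow> complex \<Rightarrow> int \<Rightarrow> complex" where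
  "chiT_phase n l n' e' u v \<tau> m =
     v * (e' + of_int m * of_int l) + u * (n' + of_int m * of_int n)
     + \<tau> * (n' * e' + e'^2 / 2 + (of_int m)^2 / 2 * (2 * of_int n * of_int l + (of_int l)^2)
            + of_int m * (of_int n * e' + n' * of_int l + of_int l * e'))"

lemma chiT_eq_phase_series:
  "chiT n l n' e' u v \<tau> = \<i> * (-1) powi \<lfloor>Re e'\<rfloor> * theta1 u \<tau> / (eta \<tau>)^3 *
     (\<Sum>\<^sub>\<infinity>m. (-1) powi (m * l) * exp (2 * pi * \<i> * chiT_phase n l n' e' u v \<tau> m))"
  unfolding chiT_def chiT_phase_def by (simp add: distrib_left exp_add mult.assoc)

lemma chiT_phase_u_plus_1:
  "chiT_phase n l n' e' (u + 1) v \<tau> m = n' + chiT_phase n l n' e' u v \<tau> m + of_int (m * n)"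
  by (simp add: chiT_phase_def algebra_simps)

lemma chiT_phase_u_plus_tau:
  "chiT_phase n l n' e' (u + \<tau>) v \<tau> m
     = (\<tau> / 2 + u - v) + chiT_phase n l (n' - 1) (e' + 1) u v \<tau> m"
  by (simp add: chiT_phase_def algebra_simps power2_eq_square)

lemma chiT_phase_v_plus_1:
  "chiT_phase n l n' e' u (v + 1) \<tau> m = e' + chiT_phase n l n' e' u v \<tau> m + of_int (m * l)"
  by (simp add: chiT_phase_def algebra_simps)

lemma chiT_phase_v_plus_mult_tau:
  "chiT_phase n l n' e' u (v + a * \<tau>) \<tau> m = - a * u + chiT_phase n l (n' + a) e' u v \<tau> m"
  by (simp add: chiT_phase_def algebra_simps)

lemma chiT_u_plus_1:
  "chiT n l n' e' (u + 1) v \<tau> = exp (2 * pi * \<i> * (n' - 1/2)) * chiT n l n' e' u v \<tau>"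
proof -
  have "(\<Sum>\<^sub>\<infinity>m. (-1) powi (m * l) * exp (2 * pi * \<i> * chiT_phase n l n' e' (u + 1) v \<tau> m))
      = exp (2 * pi * \<i> * n') * (\<Sum>\<^sub>\<infinity>m. (-1) powi (m * l) * exp (2 * pi * \<i> * chiT_phase n l n' e' u v \<tau> m))"
    by (rule infsum_exp_phase_shift) (rule chiT_phase_u_plus_1)
  moreover have "2 * pi * \<i> * (n' - 1/2) = 2 * pi * \<i> * n' - pi * \<i>"
    by (simp add: algebra_simps)
  then have "exp (2 * pi * \<i> * (n' - 1/2)) = - exp (2 * pi * \<i> * n')"
    by (simp add: exp_diff exp_pi_i)
  ultimately show ?thesis
    by (simp add: chiT_eq_phase_series theta1_plus_1)
qed

lemma chiT_u_plus_tau: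
  "chiT n l n' e' (u + \<tau>) v \<tau> = inverse (exp (2 * pi * \<i> * v)) * chiT n l (n' - 1) (e' + 1) u v \<tau>"
proof -
  have series: "(\<Sum>\<^sub>\<infinity>m. (-1) powi (m * l) * exp (2 * pi * \<i> * chiT_phase n l n' e' (u + \<tau>) v \<tau> m))
      = exp (2 * pi * \<i> * (\<tau> / 2 + u - v))
        * (\<Sum>\<^sub>\<infinity>m. (-1) powi (m * l) * exp (2 * pi * \<i> * chiT_phase n l (n' - 1) (e' + 1) u v \<tau> m))"
    by (rule infsum_exp_phase_shift[where k = "\<lambda>_. 0"]) (simp add: chiT_phase_u_plus_tau)
  have sign: "(-1::complex) powi \<lfloor>Re (e' + 1)\<rfloor> = - ((-1) powi \<lfloor>Re e'\<rfloor>)"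
    by (simp add: power_int_add)
  have "(- pi * \<i> * \<tau> - 2 * pi * \<i> * u) + 2 * pi * \<i> * (\<tau> / 2 + u - v) = - (2 * pi * \<i> * v)"
    by (simp add: algebra_simps)
  then have factor: "exp (- pi * \<i> * \<tau> - 2 * pi * \<i> * u) * exp (2 * pi * \<i> * (\<tau> / 2 + u - v))
      = inverse (exp (2 * pi * \<i> * v))"
    by (simp add: exp_minus flip: exp_add)
  show ?thesis
    unfolding chiT_eq_phase_series theta1_plus_tau series sign factor[symmetric]
    by (simp add: mult_ac)
qed

lemma chiT_v_plus_1:
  "chiT n l n' e' u (v + 1) \<tau> = exp (2 * pi * \<i> * e') * chiT n l n' e' u v \<tau>"
proof -
  have "(\<Sum>\<^sub>\<infinity>m. (-1) powi (m * l) * exp (2 * pi * \<i> * chiT_phase n l n' e' u (v + 1) \<tau> m))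
      = exp (2 * pi * \<i> * e') * (\<Sum>\<^sub>\<infinity>m. (-1) powi (m * l) * exp (2 * pi * \<i> * chiT_phase n l n' e' u v \<tau> m))"
    by (rule infsum_exp_phase_shift) (rule chiT_phase_v_plus_1)
  then show ?thesis
    by (simp add: chiT_eq_phase_series mult_ac)
qed

lemma chiT_v_plus_mult_tau:
  "chiT n l n' e' u (v + a * \<tau>) \<tau> = exp (- 2 * pi * \<i> * a * u) * chiT n l (n' + a) e' u v \<tau>"
proof -
  have "(\<Sum>\<^sub>\<infinity>m. (-1) powi (m * l) * exp (2 * pi * \<i> * chiT_phase n l n' e' u (v + a * \<tau>) \<tau> m))
      = exp (2 * pi * \<i> * (- a * u))
        * (\<Sum>\<^sub>\<infinity>m. (-1) powi (m * l) * exp (2 * pi * \<i> * chiT_phase n l (n' + a) e' u v \<tau> m))"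
    by (rule infsum_exp_phase_shift[where k = "\<lambda>_. 0"]) (simp add: chiT_phase_v_plus_mult_tau)
  moreover have "2 * pi * \<i> * (- a * u) = - 2 * pi * \<i> * a * u"
    by (simp add: algebra_simps)
  ultimately show ?thesis
    by (simp add: chiT_eq_phase_series mult_ac)
qed

lemma chiT_v_plus_tau:
  "chiT n l n' e' u (v + \<tau>) \<tau> = inverse (exp (2 * pi * \<i> * u)) * chiT n l (n' + 1) e' u v \<tau>"
  using chiT_v_plus_mult_tau[where a = 1] by (simp add: exp_minus)

theorem mainTheorem4:
  fixes l n :: int and n' e' u v \<tau> :: complex
  assumes "l > 0" and "l dvd n" and "n * l + l^2 > 0" and "Im \<tau> > 0"
  defines "y \<equiv> exp (2 * pi * \<i> * v)" and "z \<equiv> exp (2 * pi * \<i> * u)"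
  shows "chiT n l n' e' (u + 1) v \<tau> = exp (2 * pi * \<i> * (n' - 1/2)) * chiT n l n' e' u v \<tau>
    \<and> chiT n l n' e' (u + \<tau>) v \<tau> = inverse y * chiT n l (n' - 1) (e' + 1) u v \<tau>
    \<and> chiT n l n' e' u (v + 1) \<tau> = exp (2 * pi * \<i> * e') * chiT n l n' e' u v \<tau>
    \<and> chiT n l n' e' u (v + \<tau>) \<tau> = inverse z * chiT n l (n' + 1) e' u v \<tau>
    \<and> (\<forall>\<alpha>::real. chiT n l n' e' u (v + of_real \<alpha> * \<tau>) \<tau>
           = exp (- 2 * pi * \<i> * of_real \<alpha> * u) * chiT n l (n' + of_real \<alpha>) e' u v \<tau>)"
  unfolding y_def z_def
  by (simp only: chiT_u_plus_1 chiT_u_plus_tau chiT_v_plus_1 chiT_v_plus_tau chiT_v_plus_mult_tau simp_thms)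

end
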